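(* Let $\mathcal H$ be a Hilbert space, $(M_n)$ a sequence of bounded operators on $\mathcal H$, and $(L_n)$ subspaces of $\mathcal H$ such that: $(M_n)$ is uniformly bounded; $L_n$ is invariant under $M_n$; and for every sequence $(g_n)$ with $g_n\in L_n$, $\|g_n\|\le1$, the sequence $(M_ng_n)$ is relatively compact in $\mathcal H$. Assume $M_n\to M$ strongly for some bounded operator $M$ on $\mathcal H$, and that there are vectors $g_n\in L_n$ with $\|g_n\|=1$ and scalars $\lambda_n$ with $M_ng_n=\lambda_ng_n$. Then any non-zero cluster point $\lambda_0$ of $(\lambda_n)$ is an eigenvalue of $M$, and there is a subsequence of $(g_n)$ converging to a vector $g$ with $Mg=\lambda_0g$. *)

theory Defs
  imports "HOL-Analysis.Analysis"
begin

class complex_vector = real_vector +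
  fixes scaleC :: "complex \<Rightarrow> 'a \<Rightarrow> 'a"
  assumes scaleC_add_right: "scaleC a (x + y) = scaleC a x + scaleC a y"
    and scaleC_add_left: "scaleC (a + b) x = scaleC a x + scaleC b x"
    and scaleC_scaleC: "scaleC a (scaleC b x) = scaleC (a * b) x"
    and scaleC_one: "scaleC 1 x = x"
    and scaleR_scaleC: "scaleR r x = scaleC (complex_of_real r) x"

class complex_inner = complex_vector + real_normed_vector +
  fixes cinner :: "'a \<Rightarrow> 'a \<Rightarrow> complex"
  assumes cinner_commute: "cinner x y = cnj (cinner y x)"
    and cinner_add_left: "cinner (x + y) z = cinner x z + cinner y z"
    and cinner_scaleC_left: "cinner (scaleC r x) y = cnj r * cinner x y"
    and cinner_self_real: "Im (cinner x x) = 0"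
    and cinner_self_nonneg: "0 \<le> Re (cinner x x)"
    and cinner_self_eq_zero: "cinner x x = 0 \<longleftrightarrow> x = 0"
    and norm_eq_sqrt_cinner: "norm x = sqrt (Re (cinner x x))"

class chilbert_space = complex_inner + complete_space

definition bounded_clinear :: "('a::complex_inner \<Rightarrow> 'b::complex_inner) \<Rightarrow> bool" where
  "bounded_clinear f \<longleftrightarrow> bounded_linear f \<and> (\<forall>c x. f (scaleC c x) = scaleC c (f x))"

definition csubspace :: "'a::complex_vector set \<Rightarrow> bool" where
  "csubspace S \<longleftrightarrow> 0 \<in> S \<and> (\<forall>x\<in>S. \<forall>y\<in>S. x + y \<in> S) \<and> (\<forall>c. \<forall>x\<in>S. scaleC c x \<in> S)"

definition ceigenvalue :: "('a::complex_vector \<Rightarrow> 'a) \<Rightarrow> complex \<Rightarrow> bool" where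
  "ceigenvalue T l \<longleftrightarrow> (\<exists>v. v \<noteq> 0 \<and> T v = scaleC l v)"

definition cluster_point :: "(nat \<Rightarrow> 'a::metric_space) \<Rightarrow> 'a \<Rightarrow> bool" where
  "cluster_point s a \<longleftrightarrow> (\<forall>e>0. infinite {n. dist (s n) a < e})"

end

theory Submission
  imports Defs
begin

text \<open>Along a subsequence \<open>r\<close> on which \<open>\<lambda>\<^sub>n \<rightarrow> \<lambda>\<^sub>0\<close> and, by the compactness
  hypothesis, \<open>M\<^sub>n g\<^sub>n \<rightarrow> y\<close>, the eigenvalue equation gives \<open>g\<^sub>n = \<lambda>\<^sub>n\<^sup>-\<^sup>1 M\<^sub>n g\<^sub>n \<rightarrow> \<lambda>\<^sub>0\<^sup>-\<^sup>1 y\<close>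
  (here \<open>\<lambda>\<^sub>0 \<noteq> 0\<close> is used), a unit vector \<open>g\<close>. Uniform boundedness and strong
  convergence give \<open>M\<^sub>n g\<^sub>n \<rightarrow> M g\<close>, so passing to the limit in
  \<open>M\<^sub>n g\<^sub>n = \<lambda>\<^sub>n g\<^sub>n\<close> yields \<open>M g = \<lambda>\<^sub>0 g\<close>.\<close>

lemma cinner_scaleC_right: "cinner x (scaleC c (y::'a::complex_inner)) = c * cinner x y"
  by (metis cinner_commute cinner_scaleC_left complex_cnj_cnj complex_cnj_mult)

lemma norm_scaleC: "norm (scaleC c (x::'a::complex_inner)) = cmod c * norm x"
proof -
  have "cinner (scaleC c x) (scaleC c x) = cnj c * c * cinner x x"
    by (simp add: cinner_scaleC_left cinner_scaleC_right)
  also have "cinner x x = complex_of_real (Re (cinner x x))"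
    using cinner_self_real[of x] by (simp add: complex_eq_iff)
  also have "cnj c * c = complex_of_real ((cmod c)\<^sup>2)"
    by (metis complex_norm_square mult.commute)
  finally have "Re (cinner (scaleC c x) (scaleC c x)) = (cmod c)\<^sup>2 * Re (cinner x x)"
    by (metis Re_complex_of_real of_real_mult)
  then show ?thesis
    by (simp add: norm_eq_sqrt_cinner real_sqrt_mult)
qed

lemma bounded_bilinear_scaleC:
  "bounded_bilinear (scaleC :: complex \<Rightarrow> 'a::complex_inner \<Rightarrow> 'a)"
proof
  fix a a' :: complex and b b' :: 'a and r :: real
  show "scaleC (a + a') b = scaleC a b + scaleC a' b" by (rule scaleC_add_left)
  show "scaleC a (b + b') = scaleC a b + scaleC a b'" by (rule scaleC_add_right)
  show "scaleC (r *\<^sub>R a) b = r *\<^sub>R scaleC a b"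
    by (simp add: scaleR_scaleC scaleC_scaleC scaleR_conv_of_real)
  show "scaleC a (r *\<^sub>R b) = r *\<^sub>R scaleC a b"
    by (simp add: scaleR_scaleC scaleC_scaleC mult.commute)
next
  show "\<exists>K. \<forall>a b. norm (scaleC a (b::'a)) \<le> norm a * norm b * K"
    by (rule exI[of _ 1]) (simp add: norm_scaleC)
qed

lemmas tendsto_scaleC = bounded_bilinear.tendsto[OF bounded_bilinear_scaleC]

lemma cluster_point_imp_subseq_tendsto:
  assumes "cluster_point s l"
  shows "\<exists>r. strict_mono r \<and> (s \<circ> r) \<longlonglongrightarrow> l"
proof -
  have "\<exists>n>m. dist (s n) l < inverse (Suc k)" for k m
    using assms unfolding cluster_point_def infinite_nat_iff_unbounded by simp
  define f where "f k m = (SOME n. n > m \<and> dist (s n) l < inverse (Suc k))" for k m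
  have f: "f k m > m \<and> dist (s (f k m)) l < inverse (Suc k)" for k m
    unfolding f_def by (rule someI_ex) fact
  define r where "r = rec_nat (f 0 0) (\<lambda>k. f (Suc k))"
  have r_Suc: "r (Suc k) = f (Suc k) (r k)" for k
    by (simp add: r_def)
  have "strict_mono r"
    unfolding strict_mono_Suc_iff using f r_Suc by simp
  moreover have "dist (s (r k)) l < inverse (Suc k)" for k
  proof (cases k)
    case 0
    then show ?thesis using f[of 0 0] by (simp add: r_def)
  next
    case (Suc j)
    then show ?thesis using f[of "r j" "Suc j"] r_Suc[of j] by simp
  qed
  then have "(\<lambda>k. dist (s (r k)) l) \<longlonglongrightarrow> 0"
    by (intro Lim_null_comparison[OF _ LIMSEQ_inverse_real_of_nat] always_eventually allI)
      (simp add: less_imp_le)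
  then have "(s \<circ> r) \<longlonglongrightarrow> l"
    unfolding o_def by (rule tendsto_dist_iff[THEN iffD2])
  ultimately show ?thesis
    by blast
qed

lemma strong_limit_tendsto:
  fixes T :: "nat \<Rightarrow> 'a::real_normed_vector \<Rightarrow> 'b::real_normed_vector"
  assumes "\<And>n. linear (T n)"
    and "\<And>n x. norm (T n x) \<le> C * norm x"
    and "\<And>x. (\<lambda>n. T n x) \<longlonglongrightarrow> S x"
    and "x \<longlonglongrightarrow> a"
  shows "(\<lambda>n. T n (x n)) \<longlonglongrightarrow> S a"
proof -
  have bound: "norm (T n (x n) - T n a) \<le> C * norm (x n - a)" for n
    using assms(2)[of n "x n - a"] linear_diff[OF assms(1)] by simp
  have "(\<lambda>n. C * norm (x n - a)) \<longlonglongrightarrow> 0"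
    using assms(4) by (simp add: tendsto_mult_right_zero tendsto_norm_zero LIM_zero)
  with always_eventually[OF allI[OF bound]] have "(\<lambda>n. T n (x n) - T n a) \<longlonglongrightarrow> 0"
    by (rule Lim_null_comparison)
  from tendsto_add[OF this assms(3)[of a]] show ?thesis
    by simp
qed

lemma eigenvector_tendsto:
  fixes T :: "nat \<Rightarrow> 'a::complex_inner \<Rightarrow> 'a"
  assumes "\<And>n. T n (x n) = scaleC (l n) (x n)"
    and "l \<longlonglongrightarrow> l0" and "l0 \<noteq> 0"
    and "(\<lambda>n. T n (x n)) \<longlonglongrightarrow> y"
  shows "x \<longlonglongrightarrow> scaleC (inverse l0) y"
proof -
  have "\<forall>\<^sub>F n in sequentially. scaleC (inverse (l n)) (T n (x n)) = x n"
    using tendsto_imp_eventually_ne[OF assms(2,3)]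
    by eventually_elim (simp add: assms(1) scaleC_scaleC scaleC_one)
  with tendsto_scaleC[OF tendsto_inverse[OF assms(2,3)] assms(4)] show ?thesis
    by (rule Lim_transform_eventually)
qed

lemma eigenvalue_of_strong_limit:
  fixes T :: "nat \<Rightarrow> 'a::complex_inner \<Rightarrow> 'a"
  assumes "\<And>n. linear (T n)"
    and "\<And>n x. norm (T n x) \<le> C * norm x"
    and "\<And>x. (\<lambda>n. T n x) \<longlonglongrightarrow> S x"
    and "\<And>n. T n (x n) = scaleC (l n) (x n)"
    and "x \<longlonglongrightarrow> a" and "l \<longlonglongrightarrow> l0"
  shows "S a = scaleC l0 a"
proof -
  have "(\<lambda>n. T n (x n)) \<longlonglongrightarrow> S a"
    using strong_limit_tendsto assms(1-3,5) .
  moreover have "(\<lambda>n. T n (x n)) \<longlonglongrightarrow> scaleC l0 a"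
    unfolding assms(4) using tendsto_scaleC[OF assms(6,5)] .
  ultimately show ?thesis
    by (rule LIMSEQ_unique)
qed

theorem mainTheorem3:
  fixes Ms :: "nat \<Rightarrow> 'a::chilbert_space \<Rightarrow> 'a"
    and M :: "'a \<Rightarrow> 'a"
    and L :: "nat \<Rightarrow> 'a set"
    and g :: "nat \<Rightarrow> 'a"
    and lam :: "nat \<Rightarrow> complex"
    and lam0 :: complex
  assumes bounded_ops: "\<And>n. bounded_clinear (Ms n)"
    and unif_bounded: "\<exists>C. \<forall>n x. norm (Ms n x) \<le> C * norm x"
    and subsp: "\<And>n. csubspace (L n)"
    and invariant: "\<And>n. Ms n ` L n \<subseteq> L n"
    and rel_compact: "\<And>h. (\<forall>n. h n \<in> L n \<and> norm (h n) \<le> 1) \<Longrightarrow>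
                        compact (closure (range (\<lambda>n. Ms n (h n))))"
    and M_bounded: "bounded_clinear M"
    and strong_conv: "\<And>x. (\<lambda>n. Ms n x) \<longlonglongrightarrow> M x"
    and g_in: "\<And>n. g n \<in> L n"
    and g_norm: "\<And>n. norm (g n) = 1"
    and eigen: "\<And>n. Ms n (g n) = scaleC (lam n) (g n)"
    and cluster: "cluster_point lam lam0"
    and nonzero: "lam0 \<noteq> 0"
  shows "ceigenvalue M lam0 \<and>
         (\<exists>r g0. strict_mono r \<and> (g \<circ> r) \<longlonglongrightarrow> g0 \<and> M g0 = scaleC lam0 g0)"
proof -
  obtain C where C: "\<And>n x. norm (Ms n x) \<le> C * norm x"
    using unif_bounded by blast
  obtain r1 where r1: "strict_mono r1" "(lam \<circ> r1) \<longlonglongrightarrow> lam0"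
    using cluster_point_imp_subseq_tendsto[OF cluster] by blast
  have "seq_compact (closure (range (\<lambda>n. Ms n (g n))))"
    by (intro compact_imp_seq_compact rel_compact) (simp add: g_in g_norm)
  then obtain r2 y where r2: "strict_mono r2" "((\<lambda>n. Ms (r1 n) (g (r1 n))) \<circ> r2) \<longlonglongrightarrow> y"
    by (rule seq_compactE[of _ "\<lambda>n. Ms (r1 n) (g (r1 n))"]) (auto intro: closure_subset[THEN subsetD])
  define r where "r = r1 \<circ> r2"
  have r: "strict_mono r"
    unfolding r_def using r1 r2 by (simp add: strict_mono_o)
  have lam_r: "(lam \<circ> r) \<longlonglongrightarrow> lam0"
    using LIMSEQ_subseq_LIMSEQ[OF r1(2) r2(1)] by (simp add: r_def o_assoc)
  define g0 where "g0 = scaleC (inverse lam0) y"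
  have g_r: "(g \<circ> r) \<longlonglongrightarrow> g0"
    unfolding g0_def
    by (rule eigenvector_tendsto[OF _ lam_r nonzero, of "\<lambda>n. Ms (r n)"])
      (use eigen r2(2) in \<open>simp_all add: r_def o_def\<close>)
  have "M g0 = scaleC lam0 g0"
    using bounded_ops C LIMSEQ_subseq_LIMSEQ[OF strong_conv r] eigen g_r lam_r
    by (intro eigenvalue_of_strong_limit[of "\<lambda>n. Ms (r n)" C M "g \<circ> r" "lam \<circ> r"])
      (auto simp: bounded_clinear_def bounded_linear.linear o_def)
  moreover have "norm g0 = 1"
    using tendsto_norm[OF g_r] by (simp add: g_norm o_def LIMSEQ_const_iff)
  ultimately show ?thesis
    using r g_r unfolding ceigenvalue_def by (metis norm_zero zero_neq_one)
qed

end
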